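(* Let $\mathcal{H}$ be a hypothesis class and $k\ge0$, $m\ge1$ integers. (i) $\mathrm{ELdim}(\mathcal{H},0)\ge m$ if and only if there exist $x\in\mathcal{X}$ and $y\in\{-1,+1\}$ such that $x\in\mathrm{DIS}(\mathcal{H})$ and $\mathrm{ELdim}(\mathcal{H}[(x,y)],0)\ge m-1$. (ii) If $k\ge1$, then $\mathrm{ELdim}(\mathcal{H},k)\ge m$ if and only if there exist $x\in\mathcal{X}$ and $y\in\{-1,+1\}$ such that both $\mathrm{ELdim}(\mathcal{H}[(x,y)],k)\ge m-1$ and $\mathrm{ELdim}(\mathcal{H}[(x,-y)],k-1)\ge m-1$.
   Context: Hypotheses are maps $\mathcal{X}\to\{-1,+1\}$; $\mathcal{H}[(x,y)]=\{h\in\mathcal{H}:h(x)=y\}$; $x\in\mathrm{DIS}(\mathcal{H})$ means both $\mathcal{H}[(x,+1)]$ and $\mathcal{H}[(x,-1)]$ are nonempty. Extended mistake tree w.r.t. $\mathcal{H}$: a finite full binary tree (possibly a single leaf) in which each internal node $v$ is labeled by $x_v\in\mathcal{X}$ and has two solid downward edges, to its left child (label $-1$) and right child (label $+1$), plus one dashed downward edge to one of its two children; each leaf is labeled by some $h\in\mathcal{H}$ with $h(x_v)$ equal to the direction label at every internal node $v$ on the root-to-leaf path. A root-to-leaf path chooses at each internal node one downward edge; its length is its number of edges. The tree is $(k,m)$-difficult if every root-to-leaf path using at most $k$ solid edges has length at least $m$. $\mathrm{ELdim}(\mathcal{H},k)$ is the supremum of $m$ such that a $(k,m)$-difficult extended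 mistake tree w.r.t. $\mathcal{H}$ exists (for empty $\mathcal{H}$ no tree exists and $\mathrm{ELdim}<0$). *)

theory Defs
  imports "HOL-Library.Extended_Real"
begin

text \<open>Hypotheses are functions 'x => int taking values in {-1,1}.
  Restriction H[(x,y)] and disagreement region DIS(H).\<close>

definition restr :: "('x \<Rightarrow> int) set \<Rightarrow> 'x \<Rightarrow> int \<Rightarrow> ('x \<Rightarrow> int) set" where
  "restr H x y = {h \<in> H. h x = y}"

definition DIS :: "('x \<Rightarrow> int) set \<Rightarrow> 'x set" where
  "DIS H = {x. restr H x 1 \<noteq> {} \<and> restr H x (-1) \<noteq> {}}"

text \<open>Extended mistake trees: a leaf labelled by a hypothesis, or an internal node
  labelled by a point x, with a flag telling whether the dashed edge goes to the
  right child (label +1) or to the left child (label -1), a left child and a right child.\<close>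

datatype ('x, 'h) emtree = Leaf 'h | Node 'x bool "('x, 'h) emtree" "('x, 'h) emtree"

fun valid_tree :: "('x \<Rightarrow> int) set \<Rightarrow> ('x, 'x \<Rightarrow> int) emtree \<Rightarrow> bool" where
  "valid_tree H (Leaf h) = (h \<in> H)"
| "valid_tree H (Node x d l r) = (valid_tree (restr H x (-1)) l \<and> valid_tree (restr H x 1) r)"

text \<open>Root-to-leaf paths, recorded as pairs (number of solid edges used, length).\<close>

fun paths :: "('x, 'h) emtree \<Rightarrow> (nat \<times> nat) set" where
  "paths (Leaf h) = {(0, 0)}"
| "paths (Node x d l r) =
     {(s, Suc n) | s n. (s, n) \<in> paths (if d then r else l)}
   \<union> {(Suc s, Suc n) | s n. (s, n) \<in> paths l}
   \<union> {(Suc s, Suc n) | s n. (s, n) \<in> paths r}"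

definition difficult :: "('x, 'h) emtree \<Rightarrow> nat \<Rightarrow> nat \<Rightarrow> bool" where
  "difficult t k m = (\<forall>(s, n) \<in> paths t. s \<le> k \<longrightarrow> m \<le> n)"

text \<open>ELdim(H,k): supremum (in the extended reals) of all m such that a (k,m)-difficult
  extended mistake tree w.r.t. H exists; it is -infinity (< 0) if no tree exists,
  i.e. if H is empty.\<close>

definition ELdim :: "('x \<Rightarrow> int) set \<Rightarrow> nat \<Rightarrow> ereal" where
  "ELdim H k = Sup {ereal (real m) | m. \<exists>t. valid_tree H t \<and> difficult t k m}"

end

theory Submission
  imports Defs
begin

text \<open>A (k,m)-difficult tree with m \<ge> 1 is a node; its dashed subtree is (k,m-1)-difficult and,
  when k \<ge> 1, both subtrees are (k-1,m-1)-difficult, since a solid edge uses up one of the k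
  allowed solid edges. Conversely these conditions make the node (k,m)-difficult. Putting the
  dashed subtree on the side y and the other on the side -y turns this into the stated recursion
  for ELdim; for k = 0 the other subtree only needs to exist, i.e. H[(x,-y)] \<noteq> {}, which together
  with H[(x,y)] \<noteq> {} is x \<in> DIS(H).\<close>

lemma difficult_mono:
  "difficult t k m \<Longrightarrow> k' \<le> k \<Longrightarrow> m' \<le> m \<Longrightarrow> difficult t k' m'"
  unfolding difficult_def by fastforce

lemma difficult_Leaf_iff: "difficult (Leaf h) k m \<longleftrightarrow> m = 0"
  unfolding difficult_def by auto

lemma difficult_Node_iff:
  "difficult (Node x d l r) k m \<longleftrightarrow>
     difficult (if d then r else l) k (m - 1) \<and>
     (k \<ge> 1 \<longrightarrow> difficult l (k - 1) (m - 1) \<and> difficult r (k - 1) (m - 1))"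
proof -
  have dashed: "(\<forall>(s, n) \<in> paths t. s \<le> k \<longrightarrow> m \<le> Suc n) \<longleftrightarrow> difficult t k (m - 1)"
    for t :: "('a, 'b) emtree"
    unfolding difficult_def by auto
  have solid: "(\<forall>(s, n) \<in> paths t. Suc s \<le> k \<longrightarrow> m \<le> Suc n) \<longleftrightarrow>
      (k \<ge> 1 \<longrightarrow> difficult t (k - 1) (m - 1))" for t :: "('a, 'b) emtree"
    unfolding difficult_def by (cases k) auto
  have "difficult (Node x d l r) k m \<longleftrightarrow>
      (\<forall>(s, n) \<in> paths (if d then r else l). s \<le> k \<longrightarrow> m \<le> Suc n) \<and>
      (\<forall>(s, n) \<in> paths l. Suc s \<le> k \<longrightarrow> m \<le> Suc n) \<and>
      (\<forall>(s, n) \<in> paths r. Suc s \<le> k \<longrightarrow> m \<le> Suc n)"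
    unfolding difficult_def paths.simps by blast
  then show ?thesis
    unfolding dashed solid by blast
qed

lemma valid_tree_nonempty: "valid_tree H t \<Longrightarrow> H \<noteq> {}"
  by (induction t arbitrary: H) (auto simp: restr_def)

lemma ex_valid_tree_iff: "(\<exists>t. valid_tree H t) \<longleftrightarrow> H \<noteq> {}"
  using valid_tree_nonempty valid_tree.simps(1) by blast

lemma ELdim_ge_iff:
  "ELdim H k \<ge> ereal (real m) \<longleftrightarrow> (\<exists>t. valid_tree H t \<and> difficult t k m)"
proof
  assume ge: "ELdim H k \<ge> ereal (real m)"
  show "\<exists>t. valid_tree H t \<and> difficult t k m"
  proof (rule ccontr)
    assume none: "\<nexists>t. valid_tree H t \<and> difficult t k m"
    have "ELdim H k \<le> ereal (real m - 1)"
      unfolding ELdim_def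
    proof (rule Sup_least, clarify)
      fix m' t assume "valid_tree H t" "difficult t k m'"
      with none have "m' < m"
        using difficult_mono[of t k m' k m] by (cases "m \<le> m'") auto
      then show "ereal (real m') \<le> ereal (real m - 1)" by simp
    qed
    from order_trans[OF ge this] show False by simp
  qed
next
  assume "\<exists>t. valid_tree H t \<and> difficult t k m"
  then show "ELdim H k \<ge> ereal (real m)"
    unfolding ELdim_def by (intro Sup_upper) blast
qed

lemma ELdim_ge_pred_iff:
  "m \<ge> 1 \<Longrightarrow> ELdim H k \<ge> ereal (real m - 1) \<longleftrightarrow> (\<exists>t. valid_tree H t \<and> difficult t k (m - 1))"
  using ELdim_ge_iff[of "m - 1" H k] by (simp add: of_nat_diff)

definition dashed_node :: "'x \<Rightarrow> int \<Rightarrow> ('x, 'h) emtree \<Rightarrow> ('x, 'h) emtree \<Rightarrow> ('x, 'h) emtree" where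
  "dashed_node x y t s = (if y = 1 then Node x True s t else Node x False t s)"

lemma Node_eq_dashed_node:
  "Node x d l r = dashed_node x (if d then 1 else -1) (if d then r else l) (if d then l else r)"
  unfolding dashed_node_def by simp

lemma valid_tree_dashed_node_iff:
  assumes "y \<in> {-1, 1}"
  shows "valid_tree H (dashed_node x y t s) \<longleftrightarrow>
           valid_tree (restr H x y) t \<and> valid_tree (restr H x (-y)) s"
  using assms unfolding dashed_node_def by auto

lemma difficult_dashed_node_iff:
  "difficult (dashed_node x y t s) k m \<longleftrightarrow>
     difficult t k (m - 1) \<and> (k \<ge> 1 \<longrightarrow> difficult s (k - 1) (m - 1))"
proof -
  have "difficult t k (m - 1) \<Longrightarrow> difficult t (k - 1) (m - 1)"
    by (rule difficult_mono) auto
  then show ?thesis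
    unfolding dashed_node_def by (auto simp: difficult_Node_iff)
qed

lemma difficult_tree_step_iff:
  assumes "m \<ge> 1"
  shows "(\<exists>t. valid_tree H t \<and> difficult t k m) \<longleftrightarrow>
    (\<exists>x y. y \<in> {-1, 1} \<and>
       (\<exists>t. valid_tree (restr H x y) t \<and> difficult t k (m - 1)) \<and>
       (\<exists>s. valid_tree (restr H x (-y)) s \<and> (k \<ge> 1 \<longrightarrow> difficult s (k - 1) (m - 1))))"
    (is "?trees \<longleftrightarrow> ?split")
proof
  assume ?trees
  then obtain t where t: "valid_tree H t" "difficult t k m" by blast
  with assms obtain x d l r where "t = Node x d l r"
    by (cases t) (auto simp: difficult_Leaf_iff)
  define y :: int where "y = (if d then 1 else -1)"
  have y: "y \<in> {-1, 1}"
    unfolding y_def by simp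
  have "t = dashed_node x y (if d then r else l) (if d then l else r)"
    unfolding y_def \<open>t = Node x d l r\<close> by (rule Node_eq_dashed_node)
  with t y have "valid_tree (restr H x y) (if d then r else l)"
    "valid_tree (restr H x (-y)) (if d then l else r)"
    "difficult (if d then r else l) k (m - 1)"
    "k \<ge> 1 \<longrightarrow> difficult (if d then l else r) (k - 1) (m - 1)"
    by (simp_all add: valid_tree_dashed_node_iff difficult_dashed_node_iff)
  with y show ?split by blast
next
  assume ?split
  then obtain x y t s where "y \<in> {-1, 1}"
    "valid_tree (restr H x y) t" "difficult t k (m - 1)"
    "valid_tree (restr H x (-y)) s" "k \<ge> 1 \<longrightarrow> difficult s (k - 1) (m - 1)"
    by blast
  then have "valid_tree H (dashed_node x y t s) \<and> difficult (dashed_node x y t s) k m"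
    by (simp add: valid_tree_dashed_node_iff difficult_dashed_node_iff)
  then show ?trees by blast
qed

lemma DIS_iff_restr_nonempty:
  "y \<in> {-1, 1} \<Longrightarrow> x \<in> DIS H \<longleftrightarrow> restr H x y \<noteq> {} \<and> restr H x (-y) \<noteq> {}"
  unfolding DIS_def by auto

theorem mainTheorem20:
  fixes H :: "('x \<Rightarrow> int) set" and k m :: nat
  assumes hyp: "\<forall>h\<in>H. \<forall>x. h x \<in> {-1, 1}"
    and m1: "m \<ge> 1"
  shows "(ELdim H 0 \<ge> ereal (real m) \<longleftrightarrow>
           (\<exists>x y. y \<in> {-1, 1} \<and> x \<in> DIS H \<and>
                  ELdim (restr H x y) 0 \<ge> ereal (real m - 1)))
       \<and> (k \<ge> 1 \<longrightarrow>
           (ELdim H k \<ge> ereal (real m) \<longleftrightarrow>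
             (\<exists>x y. y \<in> {-1, 1} \<and>
                    ELdim (restr H x y) k \<ge> ereal (real m - 1) \<and>
                    ELdim (restr H x (-y)) (k - 1) \<ge> ereal (real m - 1))))"
proof (intro conjI impI)
  have DIS_step_iff: "(\<exists>t. valid_tree (restr H x y) t \<and> difficult t 0 (m - 1)) \<and>
      (\<exists>s. valid_tree (restr H x (-y)) s)
      \<longleftrightarrow> x \<in> DIS H \<and> ELdim (restr H x y) 0 \<ge> ereal (real m - 1)"
    if "y \<in> {-1, 1}" for x y
    using that valid_tree_nonempty
    by (auto simp: DIS_iff_restr_nonempty ex_valid_tree_iff ELdim_ge_pred_iff[OF m1])
  show "ELdim H 0 \<ge> ereal (real m) \<longleftrightarrow>
      (\<exists>x y. y \<in> {-1, 1} \<and> x \<in> DIS H \<and> ELdim (restr H x y) 0 \<ge> ereal (real m - 1))"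
    unfolding ELdim_ge_iff difficult_tree_step_iff[OF m1]
    by (simp cong: conj_cong add: DIS_step_iff[simplified])
next
  show "ELdim H k \<ge> ereal (real m) \<longleftrightarrow>
      (\<exists>x y. y \<in> {-1, 1} \<and> ELdim (restr H x y) k \<ge> ereal (real m - 1) \<and>
             ELdim (restr H x (-y)) (k - 1) \<ge> ereal (real m - 1))"
    if "k \<ge> 1"
    using that unfolding ELdim_ge_iff difficult_tree_step_iff[OF m1] ELdim_ge_pred_iff[OF m1]
    by auto
qed

end
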